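(* Let $F:P\to\mathbb R^{\mathbf C}$ be a nontrivial, $\mathbb R$-linear, neutral cardinal welfare function. Then $F$ satisfies the IIA criterion if and only if $|\lambda|=2$.
   Context: Fix an integer $n\ge 2$ and a set $\mathbf C$ of $n$ candidates. Fix a composition $\lambda=(\lambda_1,\dots,\lambda_m)$ of $n$ (positive integers with $\sum_i\lambda_i=n$), write $|\lambda|=m$ and $[m]=\{1,\dots,m\}$. A ballot is a function $b:\mathbf C\to[m]$ with $|b^{-1}(i)|=\lambda_i$ for every $i$; $\mathbf C_\lambda$ denotes the set of ballots. The profile space is $P=\mathbb R^{\mathbf C_\lambda}$ with basis $\{\delta_b\}$ (indicator functions) and inner product $\mathbf p\cdot\mathbf q=\sum_b\mathbf p(b)\mathbf q(b)$. For candidates $X,Y$: $\mathbf a_{X>Y}=\sum_{b:\,b(X)<b(Y)}\delta_b$. Two profiles are $X,Y$-equivalent, $\mathbf p\sim_{X,Y}\mathbf q$, if $(\mathbf p-\mathbf q)\cdot\mathbf a_{X>Y}=0$ and $(\mathbf p-\mathbf q)\cdot\mathbf a_{Y>X}=0$. A cardinal welfare function (CWF) is any map $F:P\to\mathbb R^{\mathbf C}$; it is trivial if for every $\mathbf p$ the function $F(\mathbf p):\mathbf C\to\mathbb R$ is constant. The symmetric group $S_{\mathbf C}$ acts on $\mathbf C_\lambda$ by $\sigma.b=b\circ\sigma^{-1}$, on $P$ by linearly extending $\sigma.\delta_b=\delta_{\sigma.b}$, and on $\mathbb R^{\mathbf C}$ by $(\sigma.f)(X)=f(\sigma^{-1}X)$;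 $F$ is neutral if $F(\sigma.\mathbf p)=\sigma.F(\mathbf p)$ for all $\sigma,\mathbf p$. $F$ satisfies the IIA criterion (independence of irrelevant alternatives) if for every ordered pair of distinct candidates $X,Y$ and all $\mathbf p,\mathbf q\in P$ with $\mathbf p\sim_{X,Y}\mathbf q$, $F(\mathbf p)(X)>F(\mathbf p)(Y)$ implies $F(\mathbf q)(X)>F(\mathbf q)(Y)$. *)

theory Defs
  imports Complex_Main "HOL-Library.Cardinality"
begin

text \<open>Candidates: the finite type 'c. A composition lam is a list of positive
naturals summing to CARD('c). The index set [m] is rendered as {0..<m}
(an order-preserving relabelling of {1..m}).\<close>

definition is_composition :: "nat list \<Rightarrow> nat \<Rightarrow> bool" where
  "is_composition lam n \<longleftrightarrow> (\<forall>i<length lam. lam ! i > 0) \<and> sum_list lam = n"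

definition ballots :: "nat list \<Rightarrow> ('c::finite \<Rightarrow> nat) set" where
  "ballots lam = {b. (\<forall>X. b X < length lam) \<and>
                     (\<forall>i<length lam. card {X. b X = i} = lam ! i)}"

text \<open>Profiles: real functions on ballots, i.e. functions vanishing off the ballots.\<close>
definition profiles :: "nat list \<Rightarrow> (('c::finite \<Rightarrow> nat) \<Rightarrow> real) set" where
  "profiles lam = {p. \<forall>b. b \<notin> ballots lam \<longrightarrow> p b = 0}"

definition pdot :: "nat list \<Rightarrow> (('c::finite \<Rightarrow> nat) \<Rightarrow> real) \<Rightarrow> (('c \<Rightarrow> nat) \<Rightarrow> real) \<Rightarrow> real" where
  "pdot lam p q = (\<Sum>b\<in>ballots lam. p b * q b)"

definition a_pref :: "nat list \<Rightarrow> 'c::finite \<Rightarrow> 'c \<Rightarrow> (('c \<Rightarrow> nat) \<Rightarrow> real)" where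
  "a_pref lam X Y = (\<lambda>b. if b \<in> ballots lam \<and> b X < b Y then 1 else 0)"

definition equiv_XY :: "nat list \<Rightarrow> 'c::finite \<Rightarrow> 'c \<Rightarrow> (('c \<Rightarrow> nat) \<Rightarrow> real) \<Rightarrow> (('c \<Rightarrow> nat) \<Rightarrow> real) \<Rightarrow> bool" where
  "equiv_XY lam X Y p q \<longleftrightarrow>
     pdot lam (\<lambda>b. p b - q b) (a_pref lam X Y) = 0 \<and>
     pdot lam (\<lambda>b. p b - q b) (a_pref lam Y X) = 0"

text \<open>Actions of a permutation s of the candidates:
  on ballots  s.b = b o inv s;  on profiles (linear extension of s.delta_b = delta_(s.b))
  (s.p)(b) = p(b o s);  on R^C  (s.f)(X) = f(inv s X).\<close>
definition act_profile :: "('c \<Rightarrow> 'c) \<Rightarrow> (('c \<Rightarrow> nat) \<Rightarrow> real) \<Rightarrow> (('c \<Rightarrow> nat) \<Rightarrow> real)" where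
  "act_profile s p = (\<lambda>b. p (b \<circ> s))"

definition act_fun :: "('c \<Rightarrow> 'c) \<Rightarrow> ('c \<Rightarrow> real) \<Rightarrow> ('c \<Rightarrow> real)" where
  "act_fun s f = (\<lambda>X. f (inv s X))"

type_synonym 'c cwf = "(('c \<Rightarrow> nat) \<Rightarrow> real) \<Rightarrow> ('c \<Rightarrow> real)"

definition cwf_linear :: "nat list \<Rightarrow> ('c::finite) cwf \<Rightarrow> bool" where
  "cwf_linear lam F \<longleftrightarrow>
     (\<forall>p\<in>profiles lam. \<forall>q\<in>profiles lam. F (\<lambda>b. p b + q b) = (\<lambda>X. F p X + F q X)) \<and>
     (\<forall>p\<in>profiles lam. \<forall>c::real. F (\<lambda>b. c * p b) = (\<lambda>X. c * F p X))"

definition cwf_neutral :: "nat list \<Rightarrow> ('c::finite) cwf \<Rightarrow> bool" where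
  "cwf_neutral lam F \<longleftrightarrow>
     (\<forall>s. bij s \<longrightarrow> (\<forall>p\<in>profiles lam. F (act_profile s p) = act_fun s (F p)))"

definition cwf_trivial :: "nat list \<Rightarrow> ('c::finite) cwf \<Rightarrow> bool" where
  "cwf_trivial lam F \<longleftrightarrow> (\<forall>p\<in>profiles lam. \<forall>X Y. F p X = F p Y)"

definition cwf_IIA :: "nat list \<Rightarrow> ('c::finite) cwf \<Rightarrow> bool" where
  "cwf_IIA lam F \<longleftrightarrow>
     (\<forall>X Y. X \<noteq> Y \<longrightarrow> (\<forall>p\<in>profiles lam. \<forall>q\<in>profiles lam.
        equiv_XY lam X Y p q \<longrightarrow> F p X > F p Y \<longrightarrow> F q X > F q Y))"

end

theory Submission
  imports Defs "HOL-Combinatorics.Transposition"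
begin

text \<open>By linearity F is determined by its values on the indicator profiles \<open>\<delta>\<^sub>b\<close>, and by
neutrality \<open>F(\<delta>\<^sub>b)(X)\<close> depends only on the rank \<open>b(X)\<close>. Hence the margin \<open>F(p)(X) - F(p)(Y)\<close>
is a sum over ballots of \<open>p(b)\<close> times a margin depending only on \<open>(b(X), b(Y))\<close>. With two
ranks this is a combination of \<open>p \<cdot> a\<^sub>X\<^sub>>\<^sub>Y\<close> and \<open>p \<cdot> a\<^sub>Y\<^sub>>\<^sub>X\<close>, which gives IIA. Conversely, IIA
applied to \<open>\<delta>\<^sub>b - \<delta>\<^sub>b\<^sub>'\<close>, which is X,Y-equivalent to 0, makes the margin the same for all
ballots ranking X above Y; with at least three ranks the margin of ranks (0,2) is the sum of those of
(0,1) and (1,2), so this common value is 0, and with one rank there are no margins at all.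
Either way F is trivial.\<close>

lemma finite_ballots: "finite (ballots lam :: ('c::finite \<Rightarrow> nat) set)"
proof (rule finite_subset)
  show "ballots lam \<subseteq> {b::'c \<Rightarrow> nat. \<forall>X. (X \<in> UNIV \<longrightarrow> b X \<in> {..<length lam}) \<and> (X \<notin> UNIV \<longrightarrow> b X = 0)}"
    by (auto simp: ballots_def)
qed (intro finite_set_of_finite_funs; simp)

lemma ballot_rank_less: "b \<in> ballots lam \<Longrightarrow> b X < length lam"
  by (simp add: ballots_def)

lemma ballots_comp_bij:
  fixes b :: "'c::finite \<Rightarrow> nat"
  assumes b: "b \<in> ballots lam" and t: "bij t"
  shows "b \<circ> t \<in> ballots lam"
proof -
  have "card {X. b (t X) = i} = card {X. b X = i}" for i
  proof (rule bij_betw_same_card)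
    show "bij_betw t {X. b (t X) = i} {X. b X = i}"
      using t by (auto simp: bij_betw_def bij_def inj_on_def image_iff)
  qed
  then show ?thesis using b by (auto simp: ballots_def)
qed

lemma ballots_eq_comp_bij:
  fixes b b' :: "'c::finite \<Rightarrow> nat"
  assumes b: "b \<in> ballots lam" and b': "b' \<in> ballots lam"
  obtains t where "bij t" and "b' = b \<circ> t"
proof -
  have "\<forall>i. \<exists>f. i < length lam \<longrightarrow> bij_betw f {X. b' X = i} {X. b X = i}"
    using b b' by (auto simp: ballots_def intro!: finite_same_card_bij)
  then obtain f where f: "\<And>i. i < length lam \<Longrightarrow> bij_betw (f i) {X. b' X = i} {X. b X = i}"
    by metis
  define t where "t X = f (b' X) X" for X
  have rank_t: "b (t X) = b' X" and inj_t: "inj_on (f (b' X)) {Z. b' Z = b' X}" for X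
    using f[of "b' X"] b' by (auto simp: t_def bij_betw_def ballots_def)
  have "inj t"
  proof (rule injI)
    fix X Y assume eq: "t X = t Y"
    then have "b' Y = b' X" by (metis rank_t)
    with eq inj_t[of X] show "X = Y" by (auto simp: t_def inj_on_def)
  qed
  then have "bij t" by (simp add: bij_def finite_UNIV_inj_surj)
  moreover have "b' = b \<circ> t" using rank_t by (auto simp: fun_eq_iff)
  ultimately show thesis by (rule that)
qed

lemma ballots_nonempty:
  assumes "is_composition lam CARD('c::finite)"
  shows "ballots lam \<noteq> ({} :: ('c \<Rightarrow> nat) set)"
proof -
  define r where "r = concat (map (\<lambda>i. replicate (lam ! i) i) [0..<length lam])"
  have length_r: "length r = CARD('c)"
  proof -
    have "length r = sum_list (map (\<lambda>i. lam ! i) [0..<length lam])"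
      by (simp add: r_def length_concat o_def)
    then show ?thesis using assms by (simp add: map_nth is_composition_def)
  qed
  have count_r: "count_list r i = lam ! i" if "i < length lam" for i
  proof -
    have "count_list r i = (\<Sum>j\<leftarrow>[0..<length lam]. if i = j then lam ! j else 0)"
      by (simp add: r_def count_list_eq_length_filter filter_concat length_concat o_def
          filter_replicate if_distrib[where f = length] cong: if_cong)
    also have "\<dots> = lam ! i"
      using that by (simp add: sum_list_distinct_conv_sum_set)
    finally show ?thesis .
  qed
  have "\<exists>e. bij_betw e (UNIV :: 'c set) {..<length r}"
    by (rule finite_same_card_bij) (simp_all add: length_r)
  then obtain e :: "'c \<Rightarrow> nat" where e: "bij_betw e UNIV {..<length r}" ..
  define b where "b X = r ! e X" for X
  have "b \<in> ballots lam"
    unfolding ballots_def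
  proof (intro CollectI conjI allI impI)
    fix X
    have "e X < length r" using e by (auto simp: bij_betw_def)
    then have "b X \<in> set r" unfolding b_def by (rule nth_mem)
    then show "b X < length lam" by (auto simp: r_def)
  next
    fix i assume i: "i < length lam"
    have "e ` {X. b X = i} = {k \<in> range e. i = r ! k}"
      by (auto simp: b_def)
    also have "\<dots> = {k. k < length r \<and> i = r ! k}"
      using e by (auto simp: bij_betw_def)
    finally have "card (e ` {X. b X = i}) = count_list r i"
      by (simp add: count_list_eq_length_filter length_filter_conv_card)
    moreover have "inj_on e {X. b X = i}"
      using e by (metis bij_betw_imp_inj_on inj_on_subset subset_UNIV)
    ultimately show "card {X. b X = i} = lam ! i"
      using count_r i by (simp add: card_image)
  qed
  then show ?thesis by blast
qed

lemma ballot_with_ranks: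
  fixes X Y :: "'c::finite"
  assumes comp: "is_composition lam CARD('c)" and "X \<noteq> Y"
    and i: "i < length lam" and j: "j < length lam" and "i \<noteq> j"
  obtains b where "b \<in> ballots lam" and "b X = i" and "b Y = j"
proof -
  have rank_taken: "\<exists>Z. b Z = k" if "b \<in> ballots lam" "k < length lam" for b :: "'c \<Rightarrow> nat" and k
  proof (rule ccontr)
    assume "\<nexists>Z. b Z = k"
    then have "lam ! k = 0" using that by (auto simp: ballots_def)
    then show False using comp that(2) by (auto simp: is_composition_def)
  qed
  obtain b0 :: "'c \<Rightarrow> nat" where b0: "b0 \<in> ballots lam"
    using ballots_nonempty[OF comp] by blast
  obtain X' where X': "b0 X' = i" using rank_taken[OF b0 i] by blast
  define b1 where "b1 = b0 \<circ> transpose X X'"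
  have b1: "b1 \<in> ballots lam" unfolding b1_def by (simp add: ballots_comp_bij[OF b0])
  obtain Y' where Y': "b1 Y' = j" using rank_taken[OF b1 j] by blast
  have "b1 X = i" using X' by (simp add: b1_def)
  then have "Y' \<noteq> X" using Y' \<open>i \<noteq> j\<close> by auto
  define b2 where "b2 = b1 \<circ> transpose Y Y'"
  have "b2 \<in> ballots lam" unfolding b2_def by (simp add: ballots_comp_bij[OF b1])
  moreover have "b2 X = i"
    using \<open>b1 X = i\<close> \<open>X \<noteq> Y\<close> \<open>Y' \<noteq> X\<close> by (simp add: b2_def transpose_def)
  moreover have "b2 Y = j" using Y' by (simp add: b2_def)
  ultimately show thesis by (rule that)
qed

definition delta_ballot :: "('c \<Rightarrow> nat) \<Rightarrow> ('c \<Rightarrow> nat) \<Rightarrow> real" where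
  "delta_ballot b = (\<lambda>c. if c = b then 1 else 0)"

lemma delta_ballot_profile: "b \<in> ballots lam \<Longrightarrow> delta_ballot b \<in> profiles lam"
  by (auto simp: delta_ballot_def profiles_def)

lemma sum_ballots_delta_ballot:
  fixes b :: "'c::finite \<Rightarrow> nat"
  assumes "b \<in> ballots lam"
  shows "(\<Sum>c\<in>ballots lam. delta_ballot b c * f c) = (f b :: real)"
proof -
  have "(\<Sum>c\<in>ballots lam. delta_ballot b c * f c) = (\<Sum>c\<in>ballots lam. if b = c then f c else 0)"
    by (rule sum.cong) (auto simp: delta_ballot_def)
  also have "\<dots> = f b" using assms by (simp add: sum.delta' finite_ballots)
  finally show ?thesis .
qed

lemma act_profile_delta_ballot:
  fixes b :: "'c \<Rightarrow> nat"
  assumes "bij t"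
  shows "act_profile (inv t) (delta_ballot b) = delta_ballot (b \<circ> t)"
proof
  fix c :: "'c \<Rightarrow> nat"
  have "c \<circ> inv t = b \<longleftrightarrow> c = b \<circ> t"
    using assms by (auto simp: fun_eq_iff) (metis bij_inv_eq_iff)+
  then show "act_profile (inv t) (delta_ballot b) c = delta_ballot (b \<circ> t) c"
    by (simp add: act_profile_def delta_ballot_def)
qed

lemma neutral_delta_ballot_comp:
  fixes F :: "('c::finite) cwf"
  assumes "cwf_neutral lam F" and b: "b \<in> ballots lam" and t: "bij t"
  shows "F (delta_ballot (b \<circ> t)) Z = F (delta_ballot b) (t Z)"
proof -
  have "F (delta_ballot (b \<circ> t)) = act_fun (inv t) (F (delta_ballot b))"
    using assms delta_ballot_profile[OF b] bij_imp_bij_inv[OF t]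
    by (metis cwf_neutral_def act_profile_delta_ballot)
  then show ?thesis using t by (simp add: act_fun_def inv_inv_eq)
qed

lemma neutral_delta_ballot_rank:
  fixes F :: "('c::finite) cwf"
  assumes N: "cwf_neutral lam F" and b: "b \<in> ballots lam" and b': "b' \<in> ballots lam"
    and rank: "b X = b' Y"
  shows "F (delta_ballot b) X = F (delta_ballot b') Y"
proof -
  obtain t where t: "bij t" and b'_eq: "b' = b \<circ> t"
    using ballots_eq_comp_bij[OF b b'] by blast
  define t' where "t' = transpose X (t Y) \<circ> t"
  have "bij t'" unfolding t'_def using t by (simp add: bij_comp)
  have "b \<circ> transpose X (t Y) = b" using rank b'_eq by (auto simp: transpose_def fun_eq_iff)
  then have "b' = b \<circ> t'" using b'_eq by (simp add: t'_def o_assoc)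
  moreover have "t' Y = X" by (simp add: t'_def)
  ultimately show ?thesis using neutral_delta_ballot_comp[OF N b \<open>bij t'\<close>] by simp
qed

lemma cwf_linear_add:
  assumes "cwf_linear lam F" and "p \<in> profiles lam" and "q \<in> profiles lam"
  shows "F (\<lambda>b. p b + q b) = (\<lambda>X. F p X + F q X)"
  using assms unfolding cwf_linear_def by blast

lemma cwf_linear_scale:
  assumes "cwf_linear lam F" and "p \<in> profiles lam"
  shows "F (\<lambda>b. c * p b) = (\<lambda>X. c * F p X)"
  using assms unfolding cwf_linear_def by blast

lemma cwf_linear_zero:
  assumes "cwf_linear lam F"
  shows "F (\<lambda>_. 0) = (\<lambda>_. 0)"
  using cwf_linear_scale[OF assms, of "\<lambda>_. 0" 0] by (simp add: profiles_def)

lemma cwf_linear_sum: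
  assumes L: "cwf_linear lam F" and "finite S" and "\<And>s. s \<in> S \<Longrightarrow> g s \<in> profiles lam"
  shows "F (\<lambda>c. \<Sum>s\<in>S. g s c) = (\<lambda>Z. \<Sum>s\<in>S. F (g s) Z)"
  using \<open>finite S\<close> assms(3)
proof (induction S rule: finite_induct)
  case empty
  then show ?case using cwf_linear_zero[OF L] by simp
next
  case (insert s S)
  have "(\<lambda>c. \<Sum>s\<in>S. g s c) \<in> profiles lam"
    using insert.prems by (auto simp: profiles_def intro!: sum.neutral)
  moreover have "g s \<in> profiles lam" using insert.prems by simp
  ultimately show ?case
    using insert cwf_linear_add[OF L] by simp
qed

lemma cwf_linear_expansion:
  fixes F :: "('c::finite) cwf"
  assumes L: "cwf_linear lam F" and p: "p \<in> profiles lam"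
  shows "F p Z = (\<Sum>b\<in>ballots lam. p b * F (delta_ballot b) Z)"
proof -
  have scaled: "(\<lambda>c. p b * delta_ballot b c) \<in> profiles lam" for b
    using p by (auto simp: profiles_def delta_ballot_def)
  have p_eq: "p = (\<lambda>c. \<Sum>b\<in>ballots lam. p b * delta_ballot b c)"
  proof
    fix c
    have "(\<Sum>b\<in>ballots lam. p b * delta_ballot b c) = (\<Sum>b\<in>ballots lam. if c = b then p b else 0)"
      by (rule sum.cong) (auto simp: delta_ballot_def)
    then show "p c = (\<Sum>b\<in>ballots lam. p b * delta_ballot b c)"
      using p by (auto simp: finite_ballots profiles_def)
  qed
  have "F p = F (\<lambda>c. \<Sum>b\<in>ballots lam. p b * delta_ballot b c)"
    using p_eq by (rule arg_cong)
  also have "\<dots> = (\<lambda>Z. \<Sum>b\<in>ballots lam. F (\<lambda>c. p b * delta_ballot b c) Z)"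
    by (rule cwf_linear_sum[OF L finite_ballots scaled])
  also have "\<dots> = (\<lambda>Z. \<Sum>b\<in>ballots lam. p b * F (delta_ballot b) Z)"
  proof (intro ext sum.cong refl)
    fix Z and b :: "'c \<Rightarrow> nat" assume "b \<in> ballots lam"
    then show "F (\<lambda>c. p b * delta_ballot b c) Z = p b * F (delta_ballot b) Z"
      using cwf_linear_scale[OF L delta_ballot_profile] by metis
  qed
  finally show ?thesis by simp
qed

definition delta_margin :: "('c::finite) cwf \<Rightarrow> 'c \<Rightarrow> 'c \<Rightarrow> ('c \<Rightarrow> nat) \<Rightarrow> real" where
  "delta_margin F X Y b = F (delta_ballot b) X - F (delta_ballot b) Y"

lemma cwf_linear_margin:
  assumes "cwf_linear lam F" and "p \<in> profiles lam"
  shows "F p X - F p Y = (\<Sum>b\<in>ballots lam. p b * delta_margin F X Y b)"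
  using cwf_linear_expansion[OF assms, of X] cwf_linear_expansion[OF assms, of Y]
  by (simp add: delta_margin_def right_diff_distrib sum_subtractf)

lemma cwf_trivial_if_margins_vanish:
  assumes "cwf_linear lam F"
    and "\<And>b X Y. b \<in> ballots lam \<Longrightarrow> delta_margin F X Y b = 0"
  shows "cwf_trivial lam F"
  unfolding cwf_trivial_def
  using cwf_linear_margin[OF assms(1)] assms(2) by simp

lemma neutral_delta_margin_ranks:
  assumes "cwf_neutral lam F" and "b \<in> ballots lam" and "b' \<in> ballots lam"
    and "b X = b' X" and "b Y = b' Y"
  shows "delta_margin F X Y b = delta_margin F X Y b'"
  using assms neutral_delta_ballot_rank[of lam F b b'] by (simp add: delta_margin_def)

lemma neutral_delta_margin_tie:
  assumes "cwf_neutral lam F" and "b \<in> ballots lam" and "b X = b Y"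
  shows "delta_margin F X Y b = 0"
  using neutral_delta_ballot_rank[OF assms(1,2,2,3)] by (simp add: delta_margin_def)

text \<open>\<open>\<delta>\<^sub>b - \<delta>\<^sub>b\<^sub>'\<close> is X,Y-equivalent to the zero profile, at which F has no strict preference.\<close>
lemma IIA_delta_margin_le:
  fixes F :: "('c::finite) cwf"
  assumes L: "cwf_linear lam F" and I: "cwf_IIA lam F" and "X \<noteq> Y"
    and b: "b \<in> ballots lam" and b': "b' \<in> ballots lam"
    and "b X < b Y" and "b' X < b' Y"
  shows "delta_margin F X Y b \<le> delta_margin F X Y b'"
proof (rule ccontr)
  assume gt: "\<not> ?thesis"
  define r where "r c = delta_ballot b c - delta_ballot b' c" for c
  have r: "r \<in> profiles lam" using b b' by (auto simp: r_def profiles_def delta_ballot_def)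
  have zero: "(\<lambda>_. 0) \<in> profiles lam" by (simp add: profiles_def)
  have "F r X - F r Y = delta_margin F X Y b - delta_margin F X Y b'"
    using cwf_linear_margin[OF L r]
    by (simp add: r_def left_diff_distrib sum_subtractf sum_ballots_delta_ballot b b')
  then have "F r X > F r Y" using gt by simp
  moreover have "equiv_XY lam X Y r (\<lambda>_. 0)"
  proof -
    have "pdot lam (\<lambda>c. r c - 0) a = a b - a b'" for a
      by (simp add: pdot_def r_def left_diff_distrib sum_subtractf sum_ballots_delta_ballot b b')
    then show ?thesis using assms(6,7) b b' by (simp add: equiv_XY_def a_pref_def)
  qed
  ultimately have "F (\<lambda>_. 0) X > F (\<lambda>_. 0) Y"
    using I \<open>X \<noteq> Y\<close> r zero unfolding cwf_IIA_def by blast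
  then show False using cwf_linear_zero[OF L] by simp
qed

lemma IIA_delta_margin_eq:
  fixes F :: "('c::finite) cwf"
  assumes "cwf_linear lam F" and "cwf_IIA lam F" and "X \<noteq> Y"
    and "b \<in> ballots lam" and "b' \<in> ballots lam" and "b X < b Y" and "b' X < b' Y"
  shows "delta_margin F X Y b = delta_margin F X Y b'"
  using IIA_delta_margin_le[OF assms] IIA_delta_margin_le[OF assms(1-3,5,4,7,6)] by simp

lemma IIA_delta_margin_zero:
  fixes F :: "('c::finite) cwf"
  assumes comp: "is_composition lam CARD('c)" and L: "cwf_linear lam F"
    and N: "cwf_neutral lam F" and I: "cwf_IIA lam F" and three: "3 \<le> length lam"
    and XY: "X \<noteq> Y" and b: "b \<in> ballots lam" and "b X < b Y"
  shows "delta_margin F X Y b = 0"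
proof -
  let ?d = "delta_margin F X Y"
  obtain b01 where b01: "b01 \<in> ballots lam" "b01 X = 0" "b01 Y = 1"
    by (rule ballot_with_ranks[OF comp XY, of 0 1]) (use three in auto)
  obtain b12 where b12: "b12 \<in> ballots lam" "b12 X = 1" "b12 Y = 2"
    by (rule ballot_with_ranks[OF comp XY, of 1 2]) (use three in auto)
  obtain b02 where b02: "b02 \<in> ballots lam" "b02 X = 0" "b02 Y = 2"
    by (rule ballot_with_ranks[OF comp XY, of 0 2]) (use three in auto)
  have "F (delta_ballot b01) Y = F (delta_ballot b12) X"
    and "F (delta_ballot b01) X = F (delta_ballot b02) X"
    and "F (delta_ballot b12) Y = F (delta_ballot b02) Y"
    using b01 b12 b02 by (auto intro: neutral_delta_ballot_rank[OF N])
  then have "?d b02 = ?d b01 + ?d b12" by (simp add: delta_margin_def)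
  moreover have "?d b01 = ?d b02" and "?d b12 = ?d b02" and "?d b = ?d b02"
    using b01 b12 b02 b \<open>b X < b Y\<close> by (auto intro: IIA_delta_margin_eq[OF L I XY])
  ultimately show ?thesis by simp
qed

lemma IIA_trivial_unless_two_ranks:
  fixes F :: "('c::finite) cwf"
  assumes comp: "is_composition lam CARD('c)" and L: "cwf_linear lam F"
    and N: "cwf_neutral lam F" and I: "cwf_IIA lam F" and "length lam \<noteq> 2"
  shows "cwf_trivial lam F"
proof (rule cwf_trivial_if_margins_vanish[OF L])
  fix b :: "'c \<Rightarrow> nat" and X Y assume b: "b \<in> ballots lam"
  consider "b X = b Y" | "b X < b Y" | "b Y < b X" by linarith
  then show "delta_margin F X Y b = 0"
  proof cases
    case 1
    then show ?thesis by (rule neutral_delta_margin_tie[OF N b])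
  next
    case 2
    then have "3 \<le> length lam"
      using ballot_rank_less[OF b, of Y] \<open>length lam \<noteq> 2\<close> by linarith
    with 2 show ?thesis using b by (auto intro: IIA_delta_margin_zero[OF comp L N I])
  next
    case 3
    then have "3 \<le> length lam"
      using ballot_rank_less[OF b, of X] \<open>length lam \<noteq> 2\<close> by linarith
    with 3 have "delta_margin F Y X b = 0" using b by (auto intro: IIA_delta_margin_zero[OF comp L N I])
    then show ?thesis by (simp add: delta_margin_def)
  qed
qed

lemma pdot_diff: "pdot lam (\<lambda>b. p b - q b) a = pdot lam p a - pdot lam q a"
  by (simp add: pdot_def left_diff_distrib sum_subtractf)

lemma two_ranks_margin_pdot:
  fixes F :: "('c::finite) cwf"
  assumes comp: "is_composition lam CARD('c)" and two: "length lam = 2"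
    and L: "cwf_linear lam F" and N: "cwf_neutral lam F" and XY: "X \<noteq> Y"
  obtains d d' where "\<And>p. p \<in> profiles lam \<Longrightarrow>
    F p X - F p Y = d * pdot lam p (a_pref lam X Y) + d' * pdot lam p (a_pref lam Y X)"
proof -
  let ?d = "delta_margin F X Y"
  obtain b01 where b01: "b01 \<in> ballots lam" "b01 X = 0" "b01 Y = 1"
    by (rule ballot_with_ranks[OF comp XY, of 0 1]) (use two in auto)
  obtain b10 where b10: "b10 \<in> ballots lam" "b10 X = 1" "b10 Y = 0"
    by (rule ballot_with_ranks[OF comp XY, of 1 0]) (use two in auto)
  have margin: "?d b = a_pref lam X Y b * ?d b01 + a_pref lam Y X b * ?d b10"
    if b: "b \<in> ballots lam" for b
  proof -
    have "b X < 2" "b Y < 2" using ballot_rank_less[OF b] two by auto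
    then consider "b X = b Y" | "b X = 0" "b Y = 1" | "b X = 1" "b Y = 0" by linarith
    then show ?thesis
    proof cases
      case 1
      then show ?thesis using neutral_delta_margin_tie[OF N b] by (simp add: a_pref_def)
    next
      case 2
      then show ?thesis using neutral_delta_margin_ranks[OF N b b01(1)] b01 b
        by (simp add: a_pref_def)
    next
      case 3
      then show ?thesis using neutral_delta_margin_ranks[OF N b b10(1)] b10 b
        by (simp add: a_pref_def)
    qed
  qed
  show thesis
  proof (rule that)
    fix p :: "('c \<Rightarrow> nat) \<Rightarrow> real" assume p: "p \<in> profiles lam"
    have "F p X - F p Y = (\<Sum>b\<in>ballots lam. p b * (a_pref lam X Y b * ?d b01 + a_pref lam Y X b * ?d b10))"
      using cwf_linear_margin[OF L p] margin by simp
    also have "\<dots> = ?d b01 * pdot lam p (a_pref lam X Y) + ?d b10 * pdot lam p (a_pref lam Y X)"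
      by (simp add: pdot_def algebra_simps sum.distrib sum_distrib_left)
    finally show "F p X - F p Y = ?d b01 * pdot lam p (a_pref lam X Y) + ?d b10 * pdot lam p (a_pref lam Y X)" .
  qed
qed

lemma two_ranks_IIA:
  fixes F :: "('c::finite) cwf"
  assumes comp: "is_composition lam CARD('c)" and two: "length lam = 2"
    and L: "cwf_linear lam F" and N: "cwf_neutral lam F"
  shows "cwf_IIA lam F"
  unfolding cwf_IIA_def
proof (intro allI impI ballI)
  fix X Y :: 'c and p q
  assume "X \<noteq> Y" and p: "p \<in> profiles lam" and q: "q \<in> profiles lam"
    and equiv: "equiv_XY lam X Y p q" and "F p X > F p Y"
  obtain d d' where margin: "\<And>p. p \<in> profiles lam \<Longrightarrow>
      F p X - F p Y = d * pdot lam p (a_pref lam X Y) + d' * pdot lam p (a_pref lam Y X)"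
    using two_ranks_margin_pdot[OF comp two L N \<open>X \<noteq> Y\<close>] by blast
  have "pdot lam p (a_pref lam X Y) = pdot lam q (a_pref lam X Y)"
    and "pdot lam p (a_pref lam Y X) = pdot lam q (a_pref lam Y X)"
    using equiv by (simp_all add: equiv_XY_def pdot_diff)
  then have "F p X - F p Y = F q X - F q Y"
    using margin[OF p] margin[OF q] by simp
  then show "F q X > F q Y" using \<open>F p X > F p Y\<close> by simp
qed

theorem mainTheorem8:
  fixes lam :: "nat list" and F :: "('c::finite) cwf"
  assumes "CARD('c) \<ge> 2"
    and "is_composition lam CARD('c)"
    and "\<not> cwf_trivial lam F"
    and "cwf_linear lam F"
    and "cwf_neutral lam F"
  shows "cwf_IIA lam F \<longleftrightarrow> length lam = 2"
proof
  assume "cwf_IIA lam F"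
  then show "length lam = 2"
    using IIA_trivial_unless_two_ranks[OF assms(2,4,5)] assms(3) by blast
next
  assume "length lam = 2"
  then show "cwf_IIA lam F" using two_ranks_IIA[OF assms(2) _ assms(4,5)] by blast
qed

end
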